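(* Assume the setting in the context (in particular $\lambda<\eta$). Let $$\tau=\min\Big\{\underline{\rho}\frac{\eta-\lambda}{L_{\nabla f}},\ \min\Big\{\underline{\rho}\frac{2(\eta-\lambda)}{L_{\nabla f}},\beta_0\Big\}\Big\}.$$ Then $\alpha_k\ge\tau$ for all $k$.
   Context: Let $g:\mathbb{R}^n\to\mathbb{R}$, $h:\mathbb{R}^n\times\mathbb{R}^d\to\mathbb{R}$ satisfy: (A1) $h$ twice differentiable in $x$, for each $\theta$ there are $0<\mu(\theta)\le L(\theta)$ with $\mu(\theta)I\preceq\nabla_x^2h(x,\theta)\preceq L(\theta)I$ for all $x$, $\nabla_xh,\nabla^2_xh$ continuous in $\theta$; (A2) $\nabla_x^2h$ is $L_H$-Lipschitz in $x$ and $\nabla^2_{x\theta}h$ is $L_J$-Lipschitz in $x$, uniformly in $\theta$. Let $\hat{x}(\theta)=\arg\min_xh(x,\theta)$, $f(\theta)=g(\hat{x}(\theta))$. (B) $f$ continuously differentiable with $L_{\nabla f}$-Lipschitz gradient, $g$ continuously differentiable with $L_{\nabla g}$-Lipschitz gradient, $L_{\nabla f},L_{\nabla g}>0$, $g$ bounded below. Fix $\beta_0>0$, $0<\underline{\rho}<1<\overline{\rho}$, $\lambda<\eta$ with $\eta\in(0,1)$. Consider sequences $\theta_k\in\mathbb{R}^d$, $z_k\in\mathbb{R}^d\setminus\{0\}$, $\epsilon_k\ge0$, $\tilde{x}_k\in\mathbb{R}^n$ with $\|\tilde{x}_k-\hat{x}(\theta_k)\|\le\epsilon_k$, $\alpha_k,\beta_k>0$,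 with $\theta_{k+1}=\theta_k-\alpha_kz_k$ and $\|z_k-\nabla f(\theta_k)\|\le(1-\eta)\|z_k\|$. Set $w_k=\|\nabla g(\tilde{x}_k)\|+\|\nabla g(\tilde{x}_{k+1})\|$, $\bar{\epsilon}_k=\max\{\epsilon_k,\epsilon_{k+1}\}$, $\hat{s}_k=\sqrt{(\eta-\lambda)^2-4L_{\nabla f}(w_k\bar{\epsilon}_k+L_{\nabla g}\bar{\epsilon}_k^2)/\|z_k\|^2}$ (assumed real), $\underline{\alpha}_k=(\eta-\lambda-\hat{s}_k)/L_{\nabla f}$, $\overline{\alpha}_k=(\eta-\lambda+\hat{s}_k)/L_{\nabla f}$. For every $k$: $\alpha_k=\underline{\rho}^{i_k}\beta_k$ where $i_k$ is the smallest nonnegative integer with $\underline{\rho}^{i_k}\beta_k\in[\underline{\alpha}_k,\overline{\alpha}_k]$; if $i_k>0$ then $\alpha_k>\underline{\rho}\,\overline{\alpha}_k$; and $\beta_{k+1}=\overline{\rho}\alpha_k$. *)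

theory Defs
  imports "HOL-Analysis.Analysis"
begin

definition wk :: "('x::euclidean_space \<Rightarrow> 'x) \<Rightarrow> (nat \<Rightarrow> 'x) \<Rightarrow> nat \<Rightarrow> real" where
  "wk gg xt k = norm (gg (xt k)) + norm (gg (xt (Suc k)))"

definition epsbar :: "(nat \<Rightarrow> real) \<Rightarrow> nat \<Rightarrow> real" where
  "epsbar eps k = max (eps k) (eps (Suc k))"

definition radicand ::
  "real \<Rightarrow> real \<Rightarrow> real \<Rightarrow> real \<Rightarrow> ('x::euclidean_space \<Rightarrow> 'x) \<Rightarrow> (nat \<Rightarrow> 'x)
     \<Rightarrow> (nat \<Rightarrow> real) \<Rightarrow> (nat \<Rightarrow> 't::euclidean_space) \<Rightarrow> nat \<Rightarrow> real" where
  "radicand eta lam Lf Lg gg xt eps z k =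
     (eta - lam)\<^sup>2 - 4 * Lf * (wk gg xt k * epsbar eps k + Lg * (epsbar eps k)\<^sup>2) / (norm (z k))\<^sup>2"

definition shat ::
  "real \<Rightarrow> real \<Rightarrow> real \<Rightarrow> real \<Rightarrow> ('x::euclidean_space \<Rightarrow> 'x) \<Rightarrow> (nat \<Rightarrow> 'x)
     \<Rightarrow> (nat \<Rightarrow> real) \<Rightarrow> (nat \<Rightarrow> 't::euclidean_space) \<Rightarrow> nat \<Rightarrow> real" where
  "shat eta lam Lf Lg gg xt eps z k = sqrt (radicand eta lam Lf Lg gg xt eps z k)"

definition alpha_lo ::
  "real \<Rightarrow> real \<Rightarrow> real \<Rightarrow> real \<Rightarrow> ('x::euclidean_space \<Rightarrow> 'x) \<Rightarrow> (nat \<Rightarrow> 'x)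
     \<Rightarrow> (nat \<Rightarrow> real) \<Rightarrow> (nat \<Rightarrow> 't::euclidean_space) \<Rightarrow> nat \<Rightarrow> real" where
  "alpha_lo eta lam Lf Lg gg xt eps z k = (eta - lam - shat eta lam Lf Lg gg xt eps z k) / Lf"

definition alpha_hi ::
  "real \<Rightarrow> real \<Rightarrow> real \<Rightarrow> real \<Rightarrow> ('x::euclidean_space \<Rightarrow> 'x) \<Rightarrow> (nat \<Rightarrow> 'x)
     \<Rightarrow> (nat \<Rightarrow> real) \<Rightarrow> (nat \<Rightarrow> 't::euclidean_space) \<Rightarrow> nat \<Rightarrow> real" where
  "alpha_hi eta lam Lf Lg gg xt eps z k = (eta - lam + shat eta lam Lf Lg gg xt eps z k) / Lf"

end

theory Submission
  imports Defs
begin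

text \<open>If backtracking occurs at step k, then alpha k > rho_lo * alpha_hi k, and
  alpha_hi k >= (eta - lam) / Lf because it adds a nonnegative square root to eta - lam.
  Otherwise the trial step beta k is accepted, which is beta0 for k = 0 and
  rho_hi * alpha (k - 1) >= alpha (k - 1) afterwards, so the bound propagates by induction.\<close>

lemma alpha_hi_ge:
  assumes "radicand eta lam Lf Lg gg xt eps z k \<ge> 0" and "Lf > 0"
  shows "(eta - lam) / Lf \<le> alpha_hi eta lam Lf Lg gg xt eps z k"
proof -
  have "shat eta lam Lf Lg gg xt eps z k \<ge> 0"
    unfolding shat_def using assms(1) by simp
  then show ?thesis
    unfolding alpha_hi_def using assms(2) by (simp add: divide_right_mono)
qed

lemma lower_bound_accepted_or_large:
  fixes alpha beta :: "nat \<Rightarrow> real"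
  assumes accepted_or_large: "\<And>k. alpha k = beta k \<or> tau \<le> alpha k"
    and trial_0: "tau \<le> beta 0"
    and trial_Suc: "\<And>k. alpha k \<le> beta (Suc k)"
  shows "tau \<le> alpha k"
proof (induction k)
  case 0
  then show ?case using accepted_or_large[of 0] trial_0 by auto
next
  case (Suc k)
  then show ?case using accepted_or_large[of "Suc k"] trial_Suc[of k] by auto
qed

theorem lemma3p14:
  fixes h :: "'x::euclidean_space \<Rightarrow> 't::euclidean_space \<Rightarrow> real"
    and Dxh :: "'x \<Rightarrow> 't \<Rightarrow> 'x"            \<comment> \<open>gradient of h in x\<close>
    and Hxx :: "'x \<Rightarrow> 't \<Rightarrow> 'x \<Rightarrow>\<^sub>L 'x"     \<comment> \<open>Hessian of h in x\<close>
    and Jxt :: "'x \<Rightarrow> 't \<Rightarrow> 't \<Rightarrow>\<^sub>L 'x"     \<comment> \<open>mixed second derivative\<close>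
    and mu L :: "'t \<Rightarrow> real"
    and LH LJ :: real
    and g :: "'x \<Rightarrow> real" and gg :: "'x \<Rightarrow> 'x"
    and xhat :: "'t \<Rightarrow> 'x" and gf :: "'t \<Rightarrow> 't"
    and Lf Lg :: real
    and beta0 rho_lo rho_hi lam eta :: real
    and theta z :: "nat \<Rightarrow> 't" and eps alpha beta :: "nat \<Rightarrow> real"
    and xt :: "nat \<Rightarrow> 'x" and ik :: "nat \<Rightarrow> nat"
  assumes
    \<comment> \<open>(A1)\<close>
    A1_grad: "\<And>x th. ((\<lambda>y. h y th) has_derivative (\<lambda>v. Dxh x th \<bullet> v)) (at x)"
    and A1_hess: "\<And>x th. ((\<lambda>y. Dxh y th) has_derivative blinfun_apply (Hxx x th)) (at x)"
    and A1_mu_L: "\<And>th. 0 < mu th \<and> mu th \<le> L th"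
    and A1_bounds: "\<And>x th v. mu th * (norm v)\<^sup>2 \<le> v \<bullet> (Hxx x th v) \<and> v \<bullet> (Hxx x th v) \<le> L th * (norm v)\<^sup>2"
    and A1_cont_grad: "\<And>x. continuous_on UNIV (\<lambda>th. Dxh x th)"
    and A1_cont_hess: "\<And>x. continuous_on UNIV (\<lambda>th. Hxx x th)"
    \<comment> \<open>(A2)\<close>
    and A2_mixed: "\<And>x th. ((\<lambda>s. Dxh x s) has_derivative blinfun_apply (Jxt x th)) (at th)"
    and A2_hess_lip: "\<And>x y th. norm (Hxx x th - Hxx y th) \<le> LH * norm (x - y)"
    and A2_mixed_lip: "\<And>x y th. norm (Jxt x th - Jxt y th) \<le> LJ * norm (x - y)"
    \<comment> \<open>lower-level solution map\<close>
    and xhat_min: "\<And>th y. h (xhat th) th \<le> h y th"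
    \<comment> \<open>(B), with f = g \<circ> xhat\<close>
    and B_f_grad: "\<And>th. ((\<lambda>s. g (xhat s)) has_derivative (\<lambda>v. gf th \<bullet> v)) (at th)"
    and B_f_cont: "continuous_on UNIV gf"
    and B_f_lip: "\<And>a b. norm (gf a - gf b) \<le> Lf * norm (a - b)"
    and B_g_grad: "\<And>x. (g has_derivative (\<lambda>v. gg x \<bullet> v)) (at x)"
    and B_g_cont: "continuous_on UNIV gg"
    and B_g_lip: "\<And>a b. norm (gg a - gg b) \<le> Lg * norm (a - b)"
    and B_pos: "Lf > 0" "Lg > 0"
    and B_bdd: "bdd_below (range g)"
    \<comment> \<open>parameters\<close>
    and beta0_pos: "beta0 > 0"
    and rho: "0 < rho_lo" "rho_lo < 1" "1 < rho_hi"
    and eta: "0 < eta" "eta < 1"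
    and lam_eta: "lam < eta"
    \<comment> \<open>sequences\<close>
    and z_nz: "\<And>k. z k \<noteq> 0"
    and eps_nn: "\<And>k. eps k \<ge> 0"
    and xt_err: "\<And>k. norm (xt k - xhat (theta k)) \<le> eps k"
    and alpha_pos: "\<And>k. alpha k > 0"
    and beta_pos: "\<And>k. beta k > 0"
    and theta_step: "\<And>k. theta (Suc k) = theta k - alpha k *\<^sub>R z k"
    and z_inexact: "\<And>k. norm (z k - gf (theta k)) \<le> (1 - eta) * norm (z k)"
    and shat_real: "\<And>k. radicand eta lam Lf Lg gg xt eps z k \<ge> 0"
    and beta_0: "beta 0 = beta0"
    and alpha_def: "\<And>k. alpha k = rho_lo ^ ik k * beta k"
    and ik_in: "\<And>k. rho_lo ^ ik k * beta k \<in>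
                     {alpha_lo eta lam Lf Lg gg xt eps z k .. alpha_hi eta lam Lf Lg gg xt eps z k}"
    and ik_least: "\<And>k j. j < ik k \<Longrightarrow> rho_lo ^ j * beta k \<notin>
                     {alpha_lo eta lam Lf Lg gg xt eps z k .. alpha_hi eta lam Lf Lg gg xt eps z k}"
    and ik_pos: "\<And>k. ik k > 0 \<Longrightarrow> alpha k > rho_lo * alpha_hi eta lam Lf Lg gg xt eps z k"
    and beta_next: "\<And>k. beta (Suc k) = rho_hi * alpha k"
  shows "\<forall>k. alpha k \<ge> min (rho_lo * (eta - lam) / Lf) (min (rho_lo * (2 * (eta - lam)) / Lf) beta0)"
proof
  fix k
  let ?tau = "min (rho_lo * (eta - lam) / Lf) (min (rho_lo * (2 * (eta - lam)) / Lf) beta0)"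
  have "alpha j = beta j \<or> ?tau \<le> alpha j" for j
  proof (cases "ik j = 0")
    case True
    then show ?thesis using alpha_def[of j] by simp
  next
    case False
    have "?tau \<le> rho_lo * ((eta - lam) / Lf)" by simp
    also have "\<dots> \<le> rho_lo * alpha_hi eta lam Lf Lg gg xt eps z j"
      using alpha_hi_ge[OF shat_real B_pos(1)] rho(1) by (intro mult_left_mono) auto
    also have "\<dots> < alpha j" using ik_pos False by simp
    finally show ?thesis by simp
  qed
  moreover have "?tau \<le> beta 0" using beta_0 by simp
  moreover have "alpha j \<le> beta (Suc j)" for j
    using beta_next[of j] rho(3) alpha_pos[of j] by simp
  ultimately show "?tau \<le> alpha k" by (rule lower_bound_accepted_or_large)
qed

end
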